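(* Let $k\in\mathbb{N}$ and let $u=a_1\cdots a_n$ be a word over a finite alphabet with attributes $(x_\ell,y_\ell)$. Let $i$ be the maximal position of $u$ such that $x_i+y_i>k+1$, and let $v=a_1\cdots a_{i-1}a_{i+1}\cdots a_n$, with $x'_\ell$ denoting the $x$-coordinate of position $\ell$ of $v$. Then $x'_{j-1}=x_j$ for all $j\in\{i+1,\dots,n\}$.
   Context: An X-ranker is a nonempty word over $\{\mathsf X_a : a\in A\}$, a Y-ranker a nonempty word over $\{\mathsf Y_a:a\in A\}$, length = word length. For a word $w$: $\mathsf X_a(w)$ is the smallest $a$-position, $r\mathsf X_a(w)$ the smallest $a$-position greater than $r(w)$; $\mathsf Y_a(w)$ the greatest $a$-position, $r\mathsf Y_a(w)$ the greatest $a$-position smaller than $r(w)$ (possibly undefined). The attribute of position $p$ of a word $w$ is $(x_p,y_p)$, where $x_p$ (the $x$-coordinate) is the minimal length of an X-ranker $r$ with $r(w)=p$ and $y_p$ is the minimal length of a Y-ranker $s$ with $s(w)=p$. *)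

theory Defs
  imports Main
begin

(* Words are lists; positions are 1-based: position q of w (1 <= q <= length w)
   carries the letter w ! (q - 1).  A ranker is a nonempty list of letters:
   the list [b1,...,bm] read as an X-ranker stands for X_b1 X_b2 ... X_bm,
   read as a Y-ranker for Y_b1 ... Y_bm; it is evaluated left to right. *)

definition apos :: "'a list \<Rightarrow> 'a \<Rightarrow> nat \<Rightarrow> bool" where
  "apos w a q \<longleftrightarrow> 1 \<le> q \<and> q \<le> length w \<and> w ! (q - 1) = a"

definition nextX :: "'a list \<Rightarrow> nat \<Rightarrow> 'a \<Rightarrow> nat option" where
  "nextX w p a = (if \<exists>q. apos w a q \<and> p < q
                  then Some (LEAST q. apos w a q \<and> p < q) else None)"

definition prevY :: "'a list \<Rightarrow> nat \<Rightarrow> 'a \<Rightarrow> nat option" where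
  "prevY w p a = (if \<exists>q. apos w a q \<and> q < p
                  then Some (GREATEST q. apos w a q \<and> q < p) else None)"

fun runX :: "'a list \<Rightarrow> nat \<Rightarrow> 'a list \<Rightarrow> nat option" where
  "runX w p [] = Some p"
| "runX w p (a # r) = (case nextX w p a of None \<Rightarrow> None | Some q \<Rightarrow> runX w q r)"

fun runY :: "'a list \<Rightarrow> nat \<Rightarrow> 'a list \<Rightarrow> nat option" where
  "runY w p [] = Some p"
| "runY w p (a # r) = (case prevY w p a of None \<Rightarrow> None | Some q \<Rightarrow> runY w q r)"

definition xrank :: "'a list \<Rightarrow> 'a list \<Rightarrow> nat option" where
  "xrank w r = (if r = [] then None else runX w 0 r)"

definition yrank :: "'a list \<Rightarrow> 'a list \<Rightarrow> nat option" where
  "yrank w r = (if r = [] then None else runY w (length w + 1) r)"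

definition xcoord :: "'a list \<Rightarrow> nat \<Rightarrow> nat" where
  "xcoord w p = (LEAST m. \<exists>r. length r = m \<and> xrank w r = Some p)"

definition ycoord :: "'a list \<Rightarrow> nat \<Rightarrow> nat" where
  "ycoord w p = (LEAST m. \<exists>r. length r = m \<and> yrank w r = Some p)"

end

theory Submission
  imports Defs
begin

(* The x-coordinate of a position is its distance from the virtual position 0 in the graph
   whose edges p -> q say that q is the first occurrence of its letter after p.  Deleting
   position i, with letter a, only affects edges that jump over i with letter a: such an edge
   p -> q of the shorter word becomes the path p -> i -> q in u, and a shortest path of u
   through i can be rerouted through the first a after i.  Both detours are free by the
   maximality of i: if a Y-step with letter a leads from q > i to i, then y_i <= y_q + 1, and
   x_q + y_q <= k + 1 < x_i + y_i forces x_q <= x_i.  Hence the shifted x-coordinates of u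
   satisfy the shortest-path equations of the shorter word, which determine its x-coordinates. *)

definition avoids :: "'a list \<Rightarrow> 'a \<Rightarrow> nat \<Rightarrow> nat \<Rightarrow> bool" where
  "avoids w a p q \<longleftrightarrow> (\<forall>t. p < t \<and> t < q \<longrightarrow> w ! (t - 1) \<noteq> a)"

definition xstep :: "'a list \<Rightarrow> nat \<Rightarrow> nat \<Rightarrow> bool" where
  "xstep w p q \<longleftrightarrow> p < q \<and> q \<le> length w \<and> avoids w (w ! (q - 1)) p q"

(* Every X-ranker starts from the virtual position 0. *)
definition xdist :: "'a list \<Rightarrow> nat \<Rightarrow> nat" where
  "xdist w p = (if p = 0 then 0 else xcoord w p)"

lemma nextX_eq_Some_iff: "nextX w p a = Some q \<longleftrightarrow> xstep w p q \<and> w ! (q - 1) = a"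
proof
  assume q: "nextX w p a = Some q"
  then have ex: "\<exists>q. apos w a q \<and> p < q" and q_def: "q = (LEAST q. apos w a q \<and> p < q)"
    unfolding nextX_def by (auto split: if_splits)
  have q_pos: "apos w a q \<and> p < q" using LeastI_ex[OF ex] q_def by simp
  have "avoids w a p q"
    unfolding avoids_def
  proof (intro allI impI notI)
    fix t assume t: "p < t \<and> t < q" and "w ! (t - 1) = a"
    then have "apos w a t" using q_pos by (auto simp: apos_def)
    then show False using t q_def not_less_Least by blast
  qed
  then show "xstep w p q \<and> w ! (q - 1) = a" using q_pos by (auto simp: xstep_def apos_def)
next
  assume "xstep w p q \<and> w ! (q - 1) = a"
  then have q_pos: "apos w a q \<and> p < q" and avoid: "avoids w a p q"
    by (auto simp: xstep_def apos_def)
  have "(LEAST q. apos w a q \<and> p < q) = q"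
  proof (rule Least_equality)
    fix t assume "apos w a t \<and> p < t"
    then show "q \<le> t" using avoid by (auto simp: apos_def avoids_def not_le)
  qed (rule q_pos)
  then show "nextX w p a = Some q" using q_pos unfolding nextX_def by auto
qed

lemma prevY_eq_SomeI:
  assumes "1 \<le> p" "p < q" "p \<le> length w" "w ! (p - 1) = a" "avoids w a p q"
  shows "prevY w q a = Some p"
proof -
  have p_pos: "apos w a p \<and> p < q" using assms by (auto simp: apos_def)
  have "(GREATEST p. apos w a p \<and> p < q) = p"
  proof (rule Greatest_equality)
    fix t assume "apos w a t \<and> t < q"
    then show "t \<le> p" using assms(5) by (auto simp: apos_def avoids_def not_le)
  qed (rule p_pos)
  then show ?thesis using p_pos unfolding prevY_def by auto
qed

lemma runX_snoc:
  "runX w p (r @ [a]) = (case runX w p r of None \<Rightarrow> None | Some q \<Rightarrow> nextX w q a)"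
  by (induction r arbitrary: p) (auto split: option.split)

lemma runY_snoc:
  "runY w p (r @ [a]) = (case runY w p r of None \<Rightarrow> None | Some q \<Rightarrow> prevY w q a)"
  by (induction r arbitrary: p) (auto split: option.split)

lemma runX_reaches: "q \<le> length w \<Longrightarrow> \<exists>r. runX w 0 r = Some q"
proof (induction q)
  case 0
  have "runX w 0 [] = Some 0" by simp
  then show ?case by blast
next
  case (Suc q)
  then obtain r where "runX w 0 r = Some q" by auto
  moreover have "nextX w q (w ! q) = Some (Suc q)"
    using Suc.prems by (auto simp: nextX_eq_Some_iff xstep_def avoids_def)
  ultimately have "runX w 0 (r @ [w ! q]) = Some (Suc q)" by (simp add: runX_snoc)
  then show ?case by blast
qed

lemma runY_reaches:
  assumes "1 \<le> q" "q \<le> length w + 1"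
  shows "\<exists>r. runY w (length w + 1) r = Some q"
  using assms(2)
proof (induction rule: inc_induct)
  case base
  have "runY w (length w + 1) [] = Some (length w + 1)" by simp
  then show ?case by blast
next
  case (step n)
  then obtain r where "runY w (length w + 1) r = Some (Suc n)" by auto
  moreover have "prevY w (Suc n) (w ! (n - 1)) = Some n"
    using assms(1) step.hyps by (intro prevY_eq_SomeI) (auto simp: avoids_def)
  ultimately have "runY w (length w + 1) (r @ [w ! (n - 1)]) = Some n" by (simp add: runY_snoc)
  then show ?case by blast
qed

lemma xcoord_le: "xrank w r = Some q \<Longrightarrow> xcoord w q \<le> length r"
  unfolding xcoord_def by (rule Least_le) blast

lemma ycoord_le: "yrank w r = Some q \<Longrightarrow> ycoord w q \<le> length r"
  unfolding ycoord_def by (rule Least_le) blast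

lemma xdist_attained: "q \<le> length w \<Longrightarrow> \<exists>r. runX w 0 r = Some q \<and> length r = xdist w q"
proof (cases "q = 0")
  case False
  assume "q \<le> length w"
  then obtain r where "runX w 0 r = Some q" using runX_reaches by blast
  then have "xrank w r = Some q" using False by (auto simp: xrank_def)
  then have "\<exists>m r. length r = m \<and> xrank w r = Some q" by blast
  then have "\<exists>r'. length r' = xcoord w q \<and> xrank w r' = Some q"
    unfolding xcoord_def by (rule LeastI_ex)
  then show ?thesis using False by (auto simp: xrank_def xdist_def split: if_splits)
qed (simp add: xdist_def)

lemma xdist_le_length: "runX w 0 r = Some q \<Longrightarrow> xdist w q \<le> length r"
proof (cases "q = 0")
  case False
  assume "runX w 0 r = Some q"
  then have "xrank w r = Some q" using False by (auto simp: xrank_def)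
  then show ?thesis using False xcoord_le by (simp add: xdist_def)
qed (simp add: xdist_def)

lemma ycoord_prevY_le:
  assumes "prevY w q a = Some p" "1 \<le> q" "q \<le> length w"
  shows "ycoord w p \<le> ycoord w q + 1"
proof -
  obtain r where "runY w (length w + 1) r = Some q" using runY_reaches assms(2,3) by force
  then have "yrank w r = Some q" using assms(3) by (auto simp: yrank_def)
  then have "\<exists>m r. length r = m \<and> yrank w r = Some q" by blast
  then have "\<exists>r'. length r' = ycoord w q \<and> yrank w r' = Some q"
    unfolding ycoord_def by (rule LeastI_ex)
  then obtain r' where r': "length r' = ycoord w q" "yrank w r' = Some q" by blast
  then have "yrank w (r' @ [a]) = Some p"
    using assms(1) by (auto simp: yrank_def runY_snoc split: if_splits)
  then show ?thesis using ycoord_le r'(1) by fastforce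
qed

lemma xdist_xstep_le: "xstep w p q \<Longrightarrow> xdist w q \<le> xdist w p + 1"
proof -
  assume step: "xstep w p q"
  then have "p \<le> length w" by (simp add: xstep_def)
  then obtain r where r: "runX w 0 r = Some p" "length r = xdist w p"
    using xdist_attained by blast
  have "nextX w p (w ! (q - 1)) = Some q" using step by (simp add: nextX_eq_Some_iff)
  then have "runX w 0 (r @ [w ! (q - 1)]) = Some q" using r(1) by (simp add: runX_snoc)
  then show ?thesis using xdist_le_length r(2) by fastforce
qed

lemma xdist_xstep_predecessor:
  assumes "1 \<le> q" "q \<le> length w"
  shows "\<exists>p. xstep w p q \<and> xdist w q = xdist w p + 1"
proof -
  obtain r where r: "runX w 0 r = Some q" "length r = xdist w q"
    using xdist_attained assms(2) by blast
  have "r \<noteq> []" using r(1) assms(1) by auto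
  then have "runX w 0 (butlast r @ [last r]) = Some q" using r(1) by simp
  then obtain p where p: "runX w 0 (butlast r) = Some p" "nextX w p (last r) = Some q"
    by (auto simp: runX_snoc split: option.splits)
  have step: "xstep w p q" using p(2) by (simp add: nextX_eq_Some_iff)
  have "xdist w p \<le> length r - 1" "length r \<noteq> 0"
    using xdist_le_length[OF p(1)] \<open>r \<noteq> []\<close> by auto
  then have "xdist w p + 1 \<le> xdist w q" using r(2) by linarith
  then show ?thesis using xdist_xstep_le[OF step] step by (intro exI[of _ p]) simp
qed

lemma xdist_unique:
  assumes "f 0 = 0"
    and le: "\<And>p q. xstep w p q \<Longrightarrow> f q \<le> f p + 1"
    and predecessor: "\<And>q. 1 \<le> q \<Longrightarrow> q \<le> length w \<Longrightarrow> \<exists>p. xstep w p q \<and> f q = f p + 1"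
    and "q \<le> length w"
  shows "f q = xdist w q"
  using assms(4)
proof (induction q rule: less_induct)
  case (less q)
  show ?case
  proof (cases "q = 0")
    case True
    then show ?thesis using assms(1) by (simp add: xdist_def)
  next
    case False
    then obtain p where p: "xstep w p q" "xdist w q = xdist w p + 1"
      using xdist_xstep_predecessor[of q w] less.prems by auto
    obtain p' where p': "xstep w p' q" "f q = f p' + 1"
      using predecessor[of q] False less.prems by auto
    have "f p = xdist w p" "f p' = xdist w p'"
      using less.IH p(1) p'(1) less.prems by (auto simp: xstep_def)
    then show ?thesis using le[OF p(1)] xdist_xstep_le[OF p'(1)] p(2) p'(2) by simp
  qed
qed

lemma avoids_first_occurrence:
  assumes "\<not> avoids w a p q"
  obtains t where "p < t" "t < q" "w ! (t - 1) = a" "avoids w a p t"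
proof -
  let ?P = "\<lambda>t. p < t \<and> t < q \<and> w ! (t - 1) = a"
  have ex: "\<exists>t. ?P t" using assms by (auto simp: avoids_def)
  have "avoids w a p (LEAST t. ?P t)"
    unfolding avoids_def using not_less_Least less_trans LeastI_ex[OF ex] by blast
  then show ?thesis using that LeastI_ex[OF ex] by blast
qed

definition remove_pos :: "nat \<Rightarrow> 'a list \<Rightarrow> 'a list" where
  "remove_pos i u = take (i - 1) u @ drop i u"

definition skip :: "nat \<Rightarrow> nat \<Rightarrow> nat" where
  "skip i p = (if p < i then p else Suc p)"

lemma skip_less_skip_iff [simp]: "skip i p < skip i q \<longleftrightarrow> p < q"
  by (auto simp: skip_def)

lemma skip_surj: "t \<noteq> i \<Longrightarrow> skip i (if t < i then t else t - 1) = t"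
  by (auto simp: skip_def)

lemma length_remove_pos: "1 \<le> i \<Longrightarrow> i \<le> length u \<Longrightarrow> length (remove_pos i u) = length u - 1"
  by (simp add: remove_pos_def)

lemma nth_remove_pos:
  assumes "1 \<le> i" "i \<le> length u" "1 \<le> p" "p < length u"
  shows "remove_pos i u ! (p - 1) = u ! (skip i p - 1)"
  using assms by (auto simp: remove_pos_def skip_def nth_append min_def)

lemma avoids_remove_pos:
  assumes "1 \<le> i" "i \<le> length u" "q < length u" "avoids u a (skip i p) (skip i q)"
  shows "avoids (remove_pos i u) a p q"
  unfolding avoids_def
proof (intro allI impI)
  fix t assume t: "p < t \<and> t < q"
  then have "remove_pos i u ! (t - 1) = u ! (skip i t - 1)"
    using assms(1-3) by (intro nth_remove_pos) auto
  then show "remove_pos i u ! (t - 1) \<noteq> a"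
    using assms(4) t by (simp add: avoids_def)
qed

lemma avoids_of_remove_pos:
  assumes "1 \<le> i" "i \<le> length u" "q < length u" "avoids (remove_pos i u) a p q"
    and "skip i p \<le> P" "Q \<le> skip i q" "P < i \<and> i < Q \<Longrightarrow> u ! (i - 1) \<noteq> a"
  shows "avoids u a P Q"
  unfolding avoids_def
proof (intro allI impI)
  fix t assume t: "P < t \<and> t < Q"
  show "u ! (t - 1) \<noteq> a"
  proof (cases "t = i")
    case True
    then show ?thesis using assms(7) t by blast
  next
    case False
    define s where "s = (if t < i then t else t - 1)"
    have ts: "skip i s = t" using skip_surj[OF False] by (simp add: s_def)
    then have "p < s" "s < q" using t assms(5,6) skip_less_skip_iff by (metis le_less_trans less_le_trans)+
    moreover have "remove_pos i u ! (s - 1) = u ! (t - 1)"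
      using nth_remove_pos[OF assms(1,2), of s] ts calculation assms(3) by simp
    ultimately show ?thesis using assms(4) by (auto simp: avoids_def)
  qed
qed

context
  fixes u :: "'a list" and i :: nat
  assumes i: "1 \<le> i" "i \<le> length u"
    and shadow: "\<And>q. i < q \<Longrightarrow> q \<le> length u \<Longrightarrow> avoids u (u ! (i - 1)) i q \<Longrightarrow>
                  xdist u q \<le> xdist u i"
begin

lemma xdist_skip_xstep_le:
  assumes step: "xstep (remove_pos i u) p q"
  shows "xdist u (skip i q) \<le> xdist u (skip i p) + 1"
proof -
  let ?a = "u ! (i - 1)" and ?c = "u ! (skip i q - 1)"
  have pq: "p < q" "q < length u" using step i by (auto simp: xstep_def length_remove_pos)
  have "remove_pos i u ! (q - 1) = ?c" using pq i by (intro nth_remove_pos) auto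
  then have avoid: "avoids (remove_pos i u) ?c p q" using step by (simp add: xstep_def)
  show ?thesis
  proof (cases "p < i \<and> i \<le> q \<and> ?c = ?a")
    case True
    then have skips: "skip i p = p" "skip i q = Suc q" by (auto simp: skip_def)
    have avoid_a: "avoids (remove_pos i u) ?a p q" using avoid True by simp
    have "avoids u ?a p i"
      by (rule avoids_of_remove_pos[OF i pq(2) avoid_a]) (use True skips in auto)
    then have "xdist u i \<le> xdist u p + 1"
      using True i by (intro xdist_xstep_le) (simp add: xstep_def)
    moreover have "avoids u ?a i (Suc q)"
      by (rule avoids_of_remove_pos[OF i pq(2) avoid_a]) (use True skips in auto)
    then have "xdist u (Suc q) \<le> xdist u i" using shadow True pq by simp
    ultimately show ?thesis using skips by simp
  next
    case False
    then have "avoids u ?c (skip i p) (skip i q)"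
      using avoids_of_remove_pos[OF i pq(2) avoid] by (auto simp: skip_def split: if_splits)
    then have "xstep u (skip i p) (skip i q)"
      using pq by (auto simp: xstep_def skip_def)
    then show ?thesis by (rule xdist_xstep_le)
  qed
qed

lemma xdist_predecessor_avoiding:
  assumes "1 \<le> q" "q \<le> length u" "q \<noteq> i"
  shows "\<exists>p. p \<noteq> i \<and> xstep u p q \<and> xdist u q = xdist u p + 1"
proof -
  obtain p where p: "xstep u p q" "xdist u q = xdist u p + 1"
    using xdist_xstep_predecessor assms(1,2) by blast
  show ?thesis
  proof (cases "p = i")
    case False
    then show ?thesis using p by blast
  next
    case True
    let ?a = "u ! (i - 1)"
    have "\<not> avoids u ?a i q" using shadow p True assms(2) by (force simp: xstep_def)
    then obtain i' where i': "i < i'" "i' < q" "u ! (i' - 1) = ?a" "avoids u ?a i i'"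
      by (rule avoids_first_occurrence)
    have "xdist u i' \<le> xdist u i" using shadow i' assms(2) by simp
    moreover have "xstep u i' q" using p(1) True i'(1,2) by (auto simp: xstep_def avoids_def)
    ultimately have "xdist u q = xdist u i' + 1"
      using xdist_xstep_le p(2) True by fastforce
    then show ?thesis using \<open>xstep u i' q\<close> i'(1) by (intro exI[of _ i']) simp
  qed
qed

lemma xdist_skip_xstep_predecessor:
  assumes "1 \<le> q" "q < length u"
  shows "\<exists>p. xstep (remove_pos i u) p q \<and> xdist u (skip i q) = xdist u (skip i p) + 1"
proof -
  have "1 \<le> skip i q" "skip i q \<le> length u" "skip i q \<noteq> i"
    using assms by (auto simp: skip_def)
  then obtain P where P: "P \<noteq> i" "xstep u P (skip i q)" "xdist u (skip i q) = xdist u P + 1"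
    using xdist_predecessor_avoiding by blast
  define p where "p = (if P < i then P else P - 1)"
  have Pp: "skip i p = P" using skip_surj[OF P(1)] by (simp add: p_def)
  have "remove_pos i u ! (q - 1) = u ! (skip i q - 1)" using assms i by (intro nth_remove_pos) auto
  moreover have "avoids (remove_pos i u) (u ! (skip i q - 1)) p q"
    using P(2) Pp assms(2) i by (intro avoids_remove_pos) (auto simp: xstep_def)
  moreover have "p < q" using P(2) Pp skip_less_skip_iff by (metis xstep_def)
  ultimately have "xstep (remove_pos i u) p q"
    using assms i by (simp add: xstep_def length_remove_pos)
  then show ?thesis using P(3) Pp by blast
qed

lemma xdist_remove_pos:
  assumes "q < length u"
  shows "xdist (remove_pos i u) q = xdist u (skip i q)"
proof (rule xdist_unique[symmetric])
  show "xdist u (skip i 0) = 0" using i by (simp add: skip_def xdist_def)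
  show "q \<le> length (remove_pos i u)" using assms i by (simp add: length_remove_pos)
qed (use xdist_skip_xstep_le xdist_skip_xstep_predecessor i in \<open>auto simp: length_remove_pos\<close>)

end

theorem lemma17:
  fixes k :: nat and u :: "'a list" and i :: nat
  assumes "1 \<le> i" and "i \<le> length u"
    and "xcoord u i + ycoord u i > k + 1"
    and "\<forall>l. 1 \<le> l \<and> l \<le> length u \<and> xcoord u l + ycoord u l > k + 1 \<longrightarrow> l \<le> i"
  shows "\<forall>j. i + 1 \<le> j \<and> j \<le> length u \<longrightarrow>
           xcoord (take (i - 1) u @ drop i u) (j - 1) = xcoord u j"
proof -
  let ?a = "u ! (i - 1)"
  have shadow: "xdist u q \<le> xdist u i" if q: "i < q" "q \<le> length u" "avoids u ?a i q" for q
  proof -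
    have "prevY u q ?a = Some i" using assms(1,2) q by (intro prevY_eq_SomeI) auto
    then have "ycoord u i \<le> ycoord u q + 1"
      by (rule ycoord_prevY_le) (use q assms(1) in auto)
    moreover have "\<not> xcoord u q + ycoord u q > k + 1" using assms(1) assms(4)[rule_format, of q] q by auto
    ultimately show ?thesis using assms(1,3) q by (simp add: xdist_def)
  qed
  show ?thesis
  proof (intro allI impI)
    fix j assume j: "i + 1 \<le> j \<and> j \<le> length u"
    then have "j - 1 < length u" "skip i (j - 1) = j" "j - 1 \<noteq> 0"
      using assms(1) by (auto simp: skip_def)
    then have "xdist (remove_pos i u) (j - 1) = xdist u j"
      using xdist_remove_pos[OF assms(1,2) shadow] by metis
    then show "xcoord (take (i - 1) u @ drop i u) (j - 1) = xcoord u j"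
      using \<open>j - 1 \<noteq> 0\<close> by (simp add: xdist_def remove_pos_def)
  qed
qed

end
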